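(* Let $T$ be a causal theory with explainable symbols $\mathbf{p}$ all of whose rules are D-rules. Then the implication $$(\mathbf{u},\widehat{\mathbf{u}})\le(\mathbf{p},\neg\mathbf{p})\ \to\ \big(T^\dagger(\mathbf{u})_{\Sigma 2}\leftrightarrow H(\mathbf{u},\widehat{\mathbf{u}})\big)$$ is logically valid.
   Context: A causal theory $T$ consists of a list $\mathbf{p}$ of distinct predicate constants (explainable symbols, not equality) and a finite set of causal rules $F\Leftarrow G$. A D-rule has the form $\bigvee_{A\in Pos}A\lor\bigvee_{A\in Neg}\neg A\Leftarrow G$ with $Pos,Neg$ finite sets of atoms whose predicates belong to $\mathbf{p}$, $G$ a first-order formula without $\to$. For each $p\in\mathbf{p}$, $u_p,\widehat u_p$ are predicate variables of the arity of $p$, with lists $\mathbf{u},\widehat{\mathbf{u}}$; for $A=p(\mathbf{t})$, $u(A)=u_p(\mathbf{t})$, $\widehat u(A)=\widehat u_p(\mathbf{t})$. $\neg\mathbf{p}$ is the list of $\lambda\mathbf{x}\neg p(\mathbf{x})$; $p\le q$ is $\forall\mathbf{x}(p(\mathbf{x})\to q(\mathbf{x}))$, componentwise conjunction for tuples ($u_p$ matched with $p$, $\widehat u_p$ with $\lambda\mathbf{x}\neg p(\mathbf{x})$). $T^\dagger(\mathbf{u})$ is the conjunction over rules of $\forall\mathbf{x}(G\to F^{\mathbf{p}}_{\mathbf{u}})$, $\mathbf{x}$ the free variables, $F^{\mathbf{p}}_{\mathbf{u}}$ replacing each $p$ by $u_p$. $H(\mathbf{u},\widehat{\mathbf{u}})$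 is the conjunction over all rules of $\forall\mathbf{x}\Big(G\to\bigvee_{A\in Pos}\big((\widehat u(A)\lor A)\to u(A)\big)\lor\bigvee_{A\in Neg}\big((u(A)\lor\neg A)\to\widehat u(A)\big)\Big)$, $\mathbf{x}$ the free object variables. For a formula $F$, $F_{\Sigma 2}$ is the result of substituting simultaneously for each $u_p$ the predicate expression $\lambda\mathbf{x}\Big(\big(((\mathbf{u},\widehat{\mathbf{u}})\le(\mathbf{p},\neg\mathbf{p}))\land\neg u_p(\mathbf{x})\land\neg\widehat u_p(\mathbf{x})\big)\leftrightarrow\neg p(\mathbf{x})\Big)$. *)

theory Defs
  imports Main
begin

text \<open>Object variables are natural numbers; 'f are function
  symbols, 'p the explainable predicate constants, 'q the other (non-explainable)
  predicate constants.\<close>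

datatype 'f trm = Var nat | Fn 'f "'f trm list"

datatype ('p, 'q, 'f) fm =
    FTrue | FFalse
  | PAtom 'p "'f trm list"
  | QAtom 'q "'f trm list"
  | Eq "'f trm" "'f trm"
  | Neg "('p, 'q, 'f) fm"
  | Conj "('p, 'q, 'f) fm" "('p, 'q, 'f) fm"
  | Disj "('p, 'q, 'f) fm" "('p, 'q, 'f) fm"
  | Ex nat "('p, 'q, 'f) fm"
  | All nat "('p, 'q, 'f) fm"

fun evalt :: "('f \<Rightarrow> 'a list \<Rightarrow> 'a) \<Rightarrow> (nat \<Rightarrow> 'a) \<Rightarrow> 'f trm \<Rightarrow> 'a" where
  "evalt F \<sigma> (Var n) = \<sigma> n"
| "evalt F \<sigma> (Fn f ts) = F f (map (evalt F \<sigma>) ts)"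

fun eval :: "('f \<Rightarrow> 'a list \<Rightarrow> 'a) \<Rightarrow> ('q \<Rightarrow> 'a list \<Rightarrow> bool) \<Rightarrow> ('p \<Rightarrow> 'a list \<Rightarrow> bool)
              \<Rightarrow> (nat \<Rightarrow> 'a) \<Rightarrow> ('p, 'q, 'f) fm \<Rightarrow> bool" where
  "eval F Q P \<sigma> FTrue = True"
| "eval F Q P \<sigma> FFalse = False"
| "eval F Q P \<sigma> (PAtom p ts) = P p (map (evalt F \<sigma>) ts)"
| "eval F Q P \<sigma> (QAtom q ts) = Q q (map (evalt F \<sigma>) ts)"
| "eval F Q P \<sigma> (Eq s t) = (evalt F \<sigma> s = evalt F \<sigma> t)"
| "eval F Q P \<sigma> (Neg a) = (\<not> eval F Q P \<sigma> a)"
| "eval F Q P \<sigma> (Conj a b) = (eval F Q P \<sigma> a \<and> eval F Q P \<sigma> b)"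
| "eval F Q P \<sigma> (Disj a b) = (eval F Q P \<sigma> a \<or> eval F Q P \<sigma> b)"
| "eval F Q P \<sigma> (Ex n a) = (\<exists>d. eval F Q P (\<sigma>(n := d)) a)"
| "eval F Q P \<sigma> (All n a) = (\<forall>d. eval F Q P (\<sigma>(n := d)) a)"

fun wf_fm :: "('p \<Rightarrow> nat) \<Rightarrow> ('p, 'q, 'f) fm \<Rightarrow> bool" where
  "wf_fm ar (PAtom p ts) = (length ts = ar p)"
| "wf_fm ar (Neg a) = wf_fm ar a"
| "wf_fm ar (Conj a b) = (wf_fm ar a \<and> wf_fm ar b)"
| "wf_fm ar (Disj a b) = (wf_fm ar a \<and> wf_fm ar b)"
| "wf_fm ar (Ex n a) = wf_fm ar a"
| "wf_fm ar (All n a) = wf_fm ar a"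
| "wf_fm ar _ = True"

type_synonym ('p, 'f) atom = "'p \<times> 'f trm list"

text \<open>A D-rule  \<Or>_{A\<in>Ps} A \<or> \<Or>_{A\<in>Ns} \<not>A \<Leftarrow> G, represented as (Ps, Ns, G).\<close>
type_synonym ('p, 'q, 'f) drule = "('p, 'f) atom set \<times> ('p, 'f) atom set \<times> ('p, 'q, 'f) fm"

definition wf_atom :: "('p \<Rightarrow> nat) \<Rightarrow> ('p, 'f) atom \<Rightarrow> bool" where
  "wf_atom ar A = (length (snd A) = ar (fst A))"

definition wf_drule :: "('p \<Rightarrow> nat) \<Rightarrow> ('p, 'q, 'f) drule \<Rightarrow> bool" where
  "wf_drule ar r = (case r of (Ps, Ns, G) \<Rightarrow>
      finite Ps \<and> finite Ns \<and> (\<forall>A\<in>Ps. wf_atom ar A) \<and> (\<forall>A\<in>Ns. wf_atom ar A) \<and> wf_fm ar G)"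

text \<open>Value of the atom A with its predicate replaced by the predicate variable family u
  (i.e. u(A) = u_p(t)); with u = P this is the value of A itself.\<close>
definition atval :: "('f \<Rightarrow> 'a list \<Rightarrow> 'a) \<Rightarrow> (nat \<Rightarrow> 'a) \<Rightarrow> ('p \<Rightarrow> 'a list \<Rightarrow> bool)
                     \<Rightarrow> ('p, 'f) atom \<Rightarrow> bool" where
  "atval F \<sigma> u A = u (fst A) (map (evalt F \<sigma>) (snd A))"

definition le_pair :: "('p \<Rightarrow> nat) \<Rightarrow> ('p \<Rightarrow> 'a list \<Rightarrow> bool) \<Rightarrow> ('p \<Rightarrow> 'a list \<Rightarrow> bool)
                       \<Rightarrow> ('p \<Rightarrow> 'a list \<Rightarrow> bool) \<Rightarrow> bool" where
  "le_pair ar u uh P = (\<forall>p xs. length xs = ar p \<longrightarrow>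
      (u p xs \<longrightarrow> P p xs) \<and> (uh p xs \<longrightarrow> \<not> P p xs))"

text \<open>T\<dagger>(u): conjunction over rules of \<forall>x (G \<longrightarrow> F^p_u) (universal closure = all assignments).\<close>
definition Tdag :: "('f \<Rightarrow> 'a list \<Rightarrow> 'a) \<Rightarrow> ('q \<Rightarrow> 'a list \<Rightarrow> bool) \<Rightarrow> ('p \<Rightarrow> 'a list \<Rightarrow> bool)
                    \<Rightarrow> ('p, 'q, 'f) drule set \<Rightarrow> ('p \<Rightarrow> 'a list \<Rightarrow> bool) \<Rightarrow> bool" where
  "Tdag F Q P T u = (\<forall>(Ps, Ns, G)\<in>T. \<forall>\<sigma>. eval F Q P \<sigma> G \<longrightarrow>
      ((\<exists>A\<in>Ps. atval F \<sigma> u A) \<or> (\<exists>A\<in>Ns. \<not> atval F \<sigma> u A)))"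

definition Hform :: "('f \<Rightarrow> 'a list \<Rightarrow> 'a) \<Rightarrow> ('q \<Rightarrow> 'a list \<Rightarrow> bool) \<Rightarrow> ('p \<Rightarrow> 'a list \<Rightarrow> bool)
                    \<Rightarrow> ('p, 'q, 'f) drule set \<Rightarrow> ('p \<Rightarrow> 'a list \<Rightarrow> bool) \<Rightarrow> ('p \<Rightarrow> 'a list \<Rightarrow> bool) \<Rightarrow> bool" where
  "Hform F Q P T u uh = (\<forall>(Ps, Ns, G)\<in>T. \<forall>\<sigma>. eval F Q P \<sigma> G \<longrightarrow>
      ((\<exists>A\<in>Ps. (atval F \<sigma> uh A \<or> atval F \<sigma> P A) \<longrightarrow> atval F \<sigma> u A) \<or>
       (\<exists>A\<in>Ns. (atval F \<sigma> u A \<or> \<not> atval F \<sigma> P A) \<longrightarrow> atval F \<sigma> uh A)))"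

text \<open>The predicate expressions substituted for the u_p by the operation _\<Sigma>2:
  \<lambda>x. ((((u,uh) \<le> (p,\<not>p)) \<and> \<not>u_p(x) \<and> \<not>uh_p(x)) \<longleftrightarrow> \<not>p(x)).
  By the substitution lemma, the value of F_\<Sigma>2 is the value of F with u_p interpreted
  by (the extension of) these expressions.\<close>
definition sigma2 :: "('p \<Rightarrow> nat) \<Rightarrow> ('p \<Rightarrow> 'a list \<Rightarrow> bool) \<Rightarrow> ('p \<Rightarrow> 'a list \<Rightarrow> bool)
                      \<Rightarrow> ('p \<Rightarrow> 'a list \<Rightarrow> bool) \<Rightarrow> ('p \<Rightarrow> 'a list \<Rightarrow> bool)" where
  "sigma2 ar u uh P = (\<lambda>p xs. ((le_pair ar u uh P \<and> \<not> u p xs \<and> \<not> uh p xs) \<longleftrightarrow> \<not> P p xs))"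

end

theory Submission
  imports Defs
begin

text \<open>Under \<open>(u, uh) \<le> (p, \<not>p)\<close> the substituted expression is equivalent, atom by atom, to
  \<open>(uh(A) \<or> A) \<longrightarrow> u(A)\<close> and its negation to \<open>(u(A) \<or> \<not>A) \<longrightarrow> uh(A)\<close>: the comparison
  hypothesis makes the first disjunct of the biconditional in \<open>\<Sigma>2\<close> true, and it rules out
  \<open>u(A) \<and> \<not>A\<close> and \<open>uh(A) \<and> A\<close>. Hence each D-rule of \<open>T\<dagger>(u)\<^sub>\<Sigma>\<^sub>2\<close> turns literally into the
  corresponding conjunct of \<open>H(u, uh)\<close>.\<close>

lemma atval_sigma2:
  assumes "le_pair ar u uh P" and "wf_atom ar A"
  shows "atval F \<sigma> (sigma2 ar u uh P) A \<longleftrightarrow>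
           ((atval F \<sigma> uh A \<or> atval F \<sigma> P A) \<longrightarrow> atval F \<sigma> u A)"
proof -
  have "length (map (evalt F \<sigma>) (snd A)) = ar (fst A)"
    using assms(2) by (simp add: wf_atom_def)
  then show ?thesis
    using assms(1) unfolding le_pair_def atval_def sigma2_def by blast
qed

lemma not_atval_sigma2:
  assumes "le_pair ar u uh P" and "wf_atom ar A"
  shows "\<not> atval F \<sigma> (sigma2 ar u uh P) A \<longleftrightarrow>
           ((atval F \<sigma> u A \<or> \<not> atval F \<sigma> P A) \<longrightarrow> atval F \<sigma> uh A)"
proof -
  have "length (map (evalt F \<sigma>) (snd A)) = ar (fst A)"
    using assms(2) by (simp add: wf_atom_def)
  then show ?thesis
    using assms(1) unfolding le_pair_def atval_def sigma2_def by blast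
qed

lemma drule_head_sigma2:
  assumes "le_pair ar u uh P" and "\<forall>A\<in>Ps \<union> Ns. wf_atom ar A"
  shows "((\<exists>A\<in>Ps. atval F \<sigma> (sigma2 ar u uh P) A) \<or>
          (\<exists>A\<in>Ns. \<not> atval F \<sigma> (sigma2 ar u uh P) A)) \<longleftrightarrow>
         ((\<exists>A\<in>Ps. (atval F \<sigma> uh A \<or> atval F \<sigma> P A) \<longrightarrow> atval F \<sigma> u A) \<or>
          (\<exists>A\<in>Ns. (atval F \<sigma> u A \<or> \<not> atval F \<sigma> P A) \<longrightarrow> atval F \<sigma> uh A))"
proof -
  have "(\<exists>A\<in>Ps. atval F \<sigma> (sigma2 ar u uh P) A) \<longleftrightarrow>
        (\<exists>A\<in>Ps. (atval F \<sigma> uh A \<or> atval F \<sigma> P A) \<longrightarrow> atval F \<sigma> u A)"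
    using assms by (intro bex_cong refl) (simp add: atval_sigma2)
  moreover have "(\<exists>A\<in>Ns. \<not> atval F \<sigma> (sigma2 ar u uh P) A) \<longleftrightarrow>
        (\<exists>A\<in>Ns. (atval F \<sigma> u A \<or> \<not> atval F \<sigma> P A) \<longrightarrow> atval F \<sigma> uh A)"
    using assms by (intro bex_cong refl) (simp add: not_atval_sigma2)
  ultimately show ?thesis by (simp only:)
qed

lemma drule_sigma2:
  assumes "le_pair ar u uh P" and "wf_drule ar (Ps, Ns, G)"
  shows "(\<forall>\<sigma>. eval F Q P \<sigma> G \<longrightarrow>
           (\<exists>A\<in>Ps. atval F \<sigma> (sigma2 ar u uh P) A) \<or>
           (\<exists>A\<in>Ns. \<not> atval F \<sigma> (sigma2 ar u uh P) A)) \<longleftrightarrow>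
         (\<forall>\<sigma>. eval F Q P \<sigma> G \<longrightarrow>
           (\<exists>A\<in>Ps. (atval F \<sigma> uh A \<or> atval F \<sigma> P A) \<longrightarrow> atval F \<sigma> u A) \<or>
           (\<exists>A\<in>Ns. (atval F \<sigma> u A \<or> \<not> atval F \<sigma> P A) \<longrightarrow> atval F \<sigma> uh A))"
proof -
  have "\<forall>A\<in>Ps \<union> Ns. wf_atom ar A"
    using assms(2) unfolding wf_drule_def by blast
  then show ?thesis
    by (simp only: drule_head_sigma2[OF assms(1)])
qed

theorem lemma7:
  fixes ar :: "'p::finite \<Rightarrow> nat"
    and T :: "('p, 'q, 'f) drule set"
  assumes "finite T"
    and "\<forall>r\<in>T. wf_drule ar r"
  shows "\<forall>(F :: 'f \<Rightarrow> 'a list \<Rightarrow> 'a) (Q :: 'q \<Rightarrow> 'a list \<Rightarrow> bool) (P :: 'p \<Rightarrow> 'a list \<Rightarrow> bool) u uh.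
           le_pair ar u uh P \<longrightarrow>
             (Tdag F Q P T (sigma2 ar u uh P) \<longleftrightarrow> Hform F Q P T u uh)"
proof (intro allI impI)
  fix F :: "'f \<Rightarrow> 'a list \<Rightarrow> 'a" and Q :: "'q \<Rightarrow> 'a list \<Rightarrow> bool" and P :: "'p \<Rightarrow> 'a list \<Rightarrow> bool"
    and u uh
  assume le: "le_pair ar u uh P"
  show "Tdag F Q P T (sigma2 ar u uh P) \<longleftrightarrow> Hform F Q P T u uh"
    unfolding Tdag_def Hform_def
    using assms(2)
    by (intro ball_cong refl)
      (simp only: split_paired_all prod.case, rule drule_sigma2[OF le], blast)
qed

end
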